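(* Let $\widetilde{\Sigma}_1,\ldots,\widetilde{\Sigma}_n$ be pairwise disjoint visibly pushdown alphabets with semantics $\mathcal{F}_k$, and let $\mathcal{M}$ and $\mathcal{S}$ be the $n$-stack and single-stack semantics defined in the context. For every well-nested word $\rho$ over $\widetilde{\Sigma}=\widetilde{\Sigma}_1\uplus\cdots\uplus\widetilde{\Sigma}_n$ without pending returns, every tuple of stacks $\vec{S}\in\prod_{j=1}^n\mathrm{stack}(V_j)$ and every stack $S\in\mathrm{stack}(V)$: if $\mathrm{top}(\vec{S})=\mathrm{top}(S)$, then $\{\mathrm{top}(\vec{T}):(\vec{S},\vec{T})\in\mathcal{M}(\rho)\}=\{\mathrm{top}(T):(S,T)\in\mathcal{S}(\rho)\}$.
   Context: A visibly pushdown (VP) alphabet is a finite alphabet partitioned into calls, returns and internals; $\Sigma^{\mathsf{call}}_k,\Sigma^{\mathsf{ret}}_k,\Sigma^{\mathsf{int}}_k$ are those of $\widetilde{\Sigma}_k$. Calls and returns are matched like parentheses (internals ignored); unmatched returns are pending returns. A word over $\widetilde{\Sigma}$ is well-nested if every matched call–return pair consists of letters from the same $\widetilde{\Sigma}_k$. Program $k$ has its own variables (disjoint across programs), $V_k$ its set of valuations, $V$ the set of valuations of all variables, identified with tuples $\nu=(\nu|_1,\ldots,\nu|_n)$, $\nu|_j\in V_j$. $\mathrm{stack}(X)$ is the set of nonempty finite stacks of frames in $X$; $S.\nu$ denotes a stack with top frame $\nu$ and rest $S$; $\mathrm{top}(S.\nu)=\nu$ and $\mathrm{top}(S_1,\ldots,S_n)=(\mathrm{top}(S_1),\ldots,\mathrm{top}(S_n))\in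 V$. Semantics $\mathcal{F}_k$: for $c\in\Sigma^{\mathsf{call}}_k$, $\mathcal{F}_k(c):V_k\to2^{V_k}$; for $r\in\Sigma^{\mathsf{ret}}_k$, $\mathcal{F}_k(r):V_k\times V_k\to2^{V_k}$; for $a\in\Sigma^{\mathsf{int}}_k$, $\mathcal{F}_k(a):V_k\to2^{V_k}$. $\mathcal{M}$: for $x\in\widetilde{\Sigma}_k$, $\mathcal{M}(x)$ relates tuples of stacks leaving components $j\ne k$ unchanged and changing the $k$-th: call $S.\nu\mapsto S.\nu.\nu'$ with $\nu'\in\mathcal{F}_k(x)(\nu)$; return $S.\nu_<.\nu\mapsto S.\nu'$ with $\nu'\in\mathcal{F}_k(x)(\nu,\nu_<)$; internal $S.\nu\mapsto S.\nu'$ with $\nu'\in\mathcal{F}_k(x)(\nu)$. $\mathcal{S}$ on stacks over $V$, for $x\in\widetilde{\Sigma}_k$: call $S.\nu\mapsto S.\nu.\nu'$ with $\nu'|_k\in\mathcal{F}_k(x)(\nu|_k)$, $\nu'|_j=\nu|_j$ for $j\ne k$; return $S.\nu_<.\nu\mapsto S.\nu'$ with $\nu'|_k\in\mathcal{F}_k(x)(\nu|_k,\nu_<|_k)$, $\nu'|_j=\nu|_j$ for $j\ne k$; internal $S.\nu\mapsto S.\nu'$ with $\nu'|_k\in\mathcal{F}_k(x)(\nu|_k)$, $\nu'|_j=\nu|_j$ for $j\ne k$. Both are extended to words by relational composition. *)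

theory Defs
  imports Main
begin

datatype kind = KCall | KRet | KInt

text \<open>The disjoint union of the VP alphabets of programs is modelled by a letter type 'a
  together with prog :: 'a => 'i (the index k with x in Sigma_k) and kd :: 'a => kind
  (call / return / internal). Stacks are nonempty lists, top frame = last element.\<close>

fun wn_aux :: "('a \<Rightarrow> 'i) \<Rightarrow> ('a \<Rightarrow> kind) \<Rightarrow> 'i list \<Rightarrow> 'a list \<Rightarrow> bool" where
  "wn_aux prog kd st [] = True"
| "wn_aux prog kd st (x # w) =
     (case kd x of
        KCall \<Rightarrow> wn_aux prog kd (prog x # st) w
      | KInt \<Rightarrow> wn_aux prog kd st w
      | KRet \<Rightarrow> (case st of [] \<Rightarrow> False
                 | k # st' \<Rightarrow> k = prog x \<and> wn_aux prog kd st' w))"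

definition well_nested_npr :: "('a \<Rightarrow> 'i) \<Rightarrow> ('a \<Rightarrow> kind) \<Rightarrow> 'a list \<Rightarrow> bool" where
  "well_nested_npr prog kd w = wn_aux prog kd [] w"

definition M1 :: "('a \<Rightarrow> 'i) \<Rightarrow> ('a \<Rightarrow> kind) \<Rightarrow> ('a \<Rightarrow> 'v \<Rightarrow> 'v set) \<Rightarrow>
    ('a \<Rightarrow> 'v \<Rightarrow> 'v \<Rightarrow> 'v set) \<Rightarrow> ('a \<Rightarrow> 'v \<Rightarrow> 'v set) \<Rightarrow> 'a \<Rightarrow>
    (('i \<Rightarrow> 'v list) \<times> ('i \<Rightarrow> 'v list)) set" where
  "M1 prog kd Fc Fr Fi x = {(Ss, Ts). (\<forall>j. j \<noteq> prog x \<longrightarrow> Ts j = Ss j) \<and>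
     (case kd x of
        KCall \<Rightarrow> (\<exists>S \<nu> \<nu>'. Ss (prog x) = S @ [\<nu>] \<and> Ts (prog x) = S @ [\<nu>, \<nu>'] \<and> \<nu>' \<in> Fc x \<nu>)
      | KRet \<Rightarrow> (\<exists>S \<nu>l \<nu> \<nu>'. Ss (prog x) = S @ [\<nu>l, \<nu>] \<and> Ts (prog x) = S @ [\<nu>'] \<and> \<nu>' \<in> Fr x \<nu> \<nu>l)
      | KInt \<Rightarrow> (\<exists>S \<nu> \<nu>'. Ss (prog x) = S @ [\<nu>] \<and> Ts (prog x) = S @ [\<nu>'] \<and> \<nu>' \<in> Fi x \<nu>))}"

fun Mw :: "('a \<Rightarrow> 'i) \<Rightarrow> ('a \<Rightarrow> kind) \<Rightarrow> ('a \<Rightarrow> 'v \<Rightarrow> 'v set) \<Rightarrow>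
    ('a \<Rightarrow> 'v \<Rightarrow> 'v \<Rightarrow> 'v set) \<Rightarrow> ('a \<Rightarrow> 'v \<Rightarrow> 'v set) \<Rightarrow> 'a list \<Rightarrow>
    (('i \<Rightarrow> 'v list) \<times> ('i \<Rightarrow> 'v list)) set" where
  "Mw prog kd Fc Fr Fi [] = Id"
| "Mw prog kd Fc Fr Fi (x # w) = M1 prog kd Fc Fr Fi x O Mw prog kd Fc Fr Fi w"

definition S1 :: "('a \<Rightarrow> 'i) \<Rightarrow> ('a \<Rightarrow> kind) \<Rightarrow> ('a \<Rightarrow> 'v \<Rightarrow> 'v set) \<Rightarrow>
    ('a \<Rightarrow> 'v \<Rightarrow> 'v \<Rightarrow> 'v set) \<Rightarrow> ('a \<Rightarrow> 'v \<Rightarrow> 'v set) \<Rightarrow> 'a \<Rightarrow>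
    (('i \<Rightarrow> 'v) list \<times> ('i \<Rightarrow> 'v) list) set" where
  "S1 prog kd Fc Fr Fi x = {(Sa, Ta).
     (case kd x of
        KCall \<Rightarrow> (\<exists>S \<nu> \<nu>'. Sa = S @ [\<nu>] \<and> Ta = S @ [\<nu>, \<nu>'] \<and> \<nu>' (prog x) \<in> Fc x (\<nu> (prog x))
                  \<and> (\<forall>j. j \<noteq> prog x \<longrightarrow> \<nu>' j = \<nu> j))
      | KRet \<Rightarrow> (\<exists>S \<nu>l \<nu> \<nu>'. Sa = S @ [\<nu>l, \<nu>] \<and> Ta = S @ [\<nu>'] \<and> \<nu>' (prog x) \<in> Fr x (\<nu> (prog x)) (\<nu>l (prog x))
                  \<and> (\<forall>j. j \<noteq> prog x \<longrightarrow> \<nu>' j = \<nu> j))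
      | KInt \<Rightarrow> (\<exists>S \<nu> \<nu>'. Sa = S @ [\<nu>] \<and> Ta = S @ [\<nu>'] \<and> \<nu>' (prog x) \<in> Fi x (\<nu> (prog x))
                  \<and> (\<forall>j. j \<noteq> prog x \<longrightarrow> \<nu>' j = \<nu> j)))}"

fun Sw :: "('a \<Rightarrow> 'i) \<Rightarrow> ('a \<Rightarrow> kind) \<Rightarrow> ('a \<Rightarrow> 'v \<Rightarrow> 'v set) \<Rightarrow>
    ('a \<Rightarrow> 'v \<Rightarrow> 'v \<Rightarrow> 'v set) \<Rightarrow> ('a \<Rightarrow> 'v \<Rightarrow> 'v set) \<Rightarrow> 'a list \<Rightarrow>
    (('i \<Rightarrow> 'v) list \<times> ('i \<Rightarrow> 'v) list) set" where
  "Sw prog kd Fc Fr Fi [] = Id"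
| "Sw prog kd Fc Fr Fi (x # w) = S1 prog kd Fc Fr Fi x O Sw prog kd Fc Fr Fi w"

definition top_tuple :: "('i \<Rightarrow> 'v list) \<Rightarrow> ('i \<Rightarrow> 'v)" where
  "top_tuple Ss = (\<lambda>j. last (Ss j))"

end

theory Submission
  imports Defs
begin

text \<open>Run both semantics in lockstep, keeping track of the programs of the pending calls.
  Invariant: the tops agree, and every pending call of program k has left one valuation \<nu>
  below the top of the single stack and the frame \<nu> k below the top of the k-th stack.
  Since the word is well-nested, a return of program k pops on both sides the frames left by
  its matching call, and the single-stack semantics reads only the k-th component of the
  popped valuation. Hence from related configurations each letter leads, in both semantics,
  to the images of one and the same set of new k-th valuations, and the corresponding
  successors are again related.\<close>

lemma Collect_relcomp:
  "{f u | u. (s, u) \<in> R O R'} = (\<Union>t\<in>{t. (s, t) \<in> R}. {f u | u. (t, u) \<in> R'})"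
  by blast

lemma agree_off_iff: "(\<forall>j. j \<noteq> k \<longrightarrow> f j = g j) \<longleftrightarrow> f = g(k := f k)"
  by (auto simp: fun_eq_iff)

inductive pending_frames :: "'i list \<Rightarrow> ('i \<Rightarrow> 'v list) \<Rightarrow> ('i \<Rightarrow> 'v) list \<Rightarrow> bool" where
  pending_frames_Nil: "pending_frames [] P Q"
| pending_frames_Cons:
    "pending_frames st P Q \<Longrightarrow> pending_frames (k # st) (P(k := P k @ [\<nu> k])) (Q @ [\<nu>])"

definition stacks_corr :: "'i list \<Rightarrow> ('i \<Rightarrow> 'v list) \<Rightarrow> ('i \<Rightarrow> 'v) list \<Rightarrow> bool" where
  "stacks_corr st Ss S \<longleftrightarrow>
     (\<exists>P Q \<nu>. pending_frames st P Q \<and> Ss = (\<lambda>j. P j @ [\<nu> j]) \<and> S = Q @ [\<nu>])"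

lemma stacks_corrI: "pending_frames st P Q \<Longrightarrow> stacks_corr st (\<lambda>j. P j @ [\<nu> j]) (Q @ [\<nu>])"
  unfolding stacks_corr_def by blast

lemma stacks_corr_top: "stacks_corr st Ss S \<Longrightarrow> top_tuple Ss = last S"
  unfolding stacks_corr_def top_tuple_def by auto

lemma stacks_corr_Nil:
  assumes "\<forall>j. Ss j \<noteq> []" and "S \<noteq> []" and "top_tuple Ss = last S"
  shows "stacks_corr [] Ss S"
  unfolding stacks_corr_def
proof (intro exI conjI)
  show "pending_frames [] (\<lambda>j. butlast (Ss j)) (butlast S)"
    by (rule pending_frames_Nil)
  show "Ss = (\<lambda>j. butlast (Ss j) @ [last S j])"
  proof
    fix j
    have "last (Ss j) = last S j"
      using assms(3) by (simp add: top_tuple_def fun_eq_iff)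
    then show "Ss j = butlast (Ss j) @ [last S j]"
      using assms(1) by (metis append_butlast_last_id)
  qed
  show "S = butlast S @ [last S]"
    using assms(2) by simp
qed

context
  fixes prog :: "'a \<Rightarrow> 'i" and kd :: "'a \<Rightarrow> kind"
    and Fc :: "'a \<Rightarrow> 'v \<Rightarrow> 'v set" and Fr :: "'a \<Rightarrow> 'v \<Rightarrow> 'v \<Rightarrow> 'v set"
    and Fi :: "'a \<Rightarrow> 'v \<Rightarrow> 'v set"
begin

definition pending_after :: "'a \<Rightarrow> 'i list \<Rightarrow> 'i list" where
  "pending_after x st =
     (case kd x of KCall \<Rightarrow> prog x # st | KInt \<Rightarrow> st | KRet \<Rightarrow> tl st)"

lemma wn_aux_ConsD:
  assumes "wn_aux prog kd st (x # w)"
  shows "kd x = KRet \<Longrightarrow> st \<noteq> [] \<and> hd st = prog x"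
    and "wn_aux prog kd (pending_after x st) w"
  using assms by (cases "kd x"; cases st; simp add: pending_after_def)+

lemma M1_KCall:
  assumes "kd x = KCall"
  shows "{Ts. (\<lambda>j. P j @ [\<nu> j], Ts) \<in> M1 prog kd Fc Fr Fi x}
       = (\<lambda>a j. (P(prog x := P (prog x) @ [\<nu> (prog x)])) j @ [(\<nu>(prog x := a)) j])
           ` Fc x (\<nu> (prog x))"
  using assms by (auto simp: M1_def fun_eq_iff)

lemma S1_KCall:
  assumes "kd x = KCall"
  shows "{T. (Q @ [\<nu>], T) \<in> S1 prog kd Fc Fr Fi x}
       = (\<lambda>a. Q @ [\<nu>, \<nu>(prog x := a)]) ` Fc x (\<nu> (prog x))"
  using assms by (auto simp: S1_def agree_off_iff)

lemma M1_KInt: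
  assumes "kd x = KInt"
  shows "{Ts. (\<lambda>j. P j @ [\<nu> j], Ts) \<in> M1 prog kd Fc Fr Fi x}
       = (\<lambda>a j. P j @ [(\<nu>(prog x := a)) j]) ` Fi x (\<nu> (prog x))"
  using assms by (auto simp: M1_def fun_eq_iff)

lemma S1_KInt:
  assumes "kd x = KInt"
  shows "{T. (Q @ [\<nu>], T) \<in> S1 prog kd Fc Fr Fi x}
       = (\<lambda>a. Q @ [\<nu>(prog x := a)]) ` Fi x (\<nu> (prog x))"
  using assms by (auto simp: S1_def agree_off_iff)

lemma M1_KRet:
  assumes "kd x = KRet"
  shows "{Ts. (\<lambda>j. (P(prog x := P (prog x) @ [\<mu>])) j @ [\<nu> j], Ts) \<in> M1 prog kd Fc Fr Fi x}
       = (\<lambda>a j. P j @ [(\<nu>(prog x := a)) j]) ` Fr x (\<nu> (prog x)) \<mu>"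
  using assms by (auto simp: M1_def fun_eq_iff)

lemma S1_KRet:
  assumes "kd x = KRet"
  shows "{T. (Q @ [\<mu>, \<nu>], T) \<in> S1 prog kd Fc Fr Fi x}
       = (\<lambda>a. Q @ [\<nu>(prog x := a)]) ` Fr x (\<nu> (prog x)) (\<mu> (prog x))"
  using assms by (auto simp: S1_def agree_off_iff)

lemma stacks_corr_step:
  assumes corr: "stacks_corr st Ss S"
    and ret_matches: "kd x = KRet \<Longrightarrow> st \<noteq> [] \<and> hd st = prog x"
  obtains m A s
  where "{Ts. (Ss, Ts) \<in> M1 prog kd Fc Fr Fi x} = m ` (A :: 'v set)"
    and "{T. (S, T) \<in> S1 prog kd Fc Fr Fi x} = s ` A"
    and "\<And>a. a \<in> A \<Longrightarrow> stacks_corr (pending_after x st) (m a) (s a)"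
proof -
  obtain P Q \<nu> where frames: "pending_frames st P Q"
    and Ss: "Ss = (\<lambda>j. P j @ [\<nu> j])" and S: "S = Q @ [\<nu>]"
    using corr unfolding stacks_corr_def by blast
  show thesis
  proof (cases "kd x")
    case KCall
    show thesis
      by (rule that[OF M1_KCall[where P=P and \<nu>=\<nu>, OF KCall, folded Ss]
                       S1_KCall[where Q=Q and \<nu>=\<nu>, OF KCall, folded S]])
        (use stacks_corrI[OF pending_frames_Cons[OF frames]] in
          \<open>simp only: KCall pending_after_def kind.case append_assoc append.simps\<close>)
  next
    case KInt
    show thesis
      by (rule that[OF M1_KInt[where P=P and \<nu>=\<nu>, OF KInt, folded Ss]
                       S1_KInt[where Q=Q and \<nu>=\<nu>, OF KInt, folded S]])
        (use stacks_corrI[OF frames] in \<open>simp only: KInt pending_after_def kind.case\<close>)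
  next
    case KRet
    then obtain st' where st: "st = prog x # st'"
      using ret_matches by (cases st) auto
    obtain P' Q' \<mu> where frames': "pending_frames st' P' Q'"
      and P: "P = P'(prog x := P' (prog x) @ [\<mu> (prog x)])" and Q: "Q = Q' @ [\<mu>]"
      using frames unfolding st by (cases rule: pending_frames.cases) auto
    have Ss': "Ss = (\<lambda>j. (P'(prog x := P' (prog x) @ [\<mu> (prog x)])) j @ [\<nu> j])"
      using Ss P by simp
    have S': "S = Q' @ [\<mu>, \<nu>]"
      using S Q by simp
    show thesis
      by (rule that[OF M1_KRet[where P=P' and \<mu>="\<mu> (prog x)" and \<nu>=\<nu>, OF KRet, folded Ss']
                       S1_KRet[where Q=Q' and \<mu>=\<mu> and \<nu>=\<nu>, OF KRet, folded S']])
        (use stacks_corrI[OF frames'] in \<open>simp only: KRet st pending_after_def kind.case list.sel\<close>)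
  qed
qed

lemma stacks_corr_reachable_tops_eq:
  assumes "wn_aux prog kd st w" and "stacks_corr st Ss S"
  shows "{top_tuple Ts | Ts. (Ss, Ts) \<in> Mw prog kd Fc Fr Fi w}
       = {last T | T. (S, T) \<in> Sw prog kd Fc Fr Fi w}"
  using assms
proof (induction w arbitrary: st Ss S)
  case Nil
  then show ?case
    using stacks_corr_top by auto
next
  case (Cons x w)
  obtain m A s
    where M1: "{Ts. (Ss, Ts) \<in> M1 prog kd Fc Fr Fi x} = m ` (A :: 'v set)"
      and S1: "{T. (S, T) \<in> S1 prog kd Fc Fr Fi x} = s ` A"
      and corr: "\<And>a. a \<in> A \<Longrightarrow> stacks_corr (pending_after x st) (m a) (s a)"
    using stacks_corr_step[OF Cons.prems(2) wn_aux_ConsD(1)[OF Cons.prems(1)]] by blast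
  have IH: "\<And>a. a \<in> A \<Longrightarrow> {top_tuple Ts | Ts. (m a, Ts) \<in> Mw prog kd Fc Fr Fi w}
                           = {last T | T. (s a, T) \<in> Sw prog kd Fc Fr Fi w}"
    using Cons.IH[OF wn_aux_ConsD(2)[OF Cons.prems(1)] corr] .
  have "{top_tuple Ts | Ts. (Ss, Ts) \<in> Mw prog kd Fc Fr Fi (x # w)}
      = (\<Union>a\<in>A. {top_tuple Ts | Ts. (m a, Ts) \<in> Mw prog kd Fc Fr Fi w})"
    unfolding Mw.simps Collect_relcomp M1 by simp
  also have "\<dots> = (\<Union>a\<in>A. {last T | T. (s a, T) \<in> Sw prog kd Fc Fr Fi w})"
    by (rule SUP_cong[OF refl IH])
  also have "\<dots> = {last T | T. (S, T) \<in> Sw prog kd Fc Fr Fi (x # w)}"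
    unfolding Sw.simps Collect_relcomp S1 by simp
  finally show ?case .
qed

end

theorem lemmaC2:
  fixes prog :: "'a \<Rightarrow> 'i::finite" and kd :: "'a \<Rightarrow> kind"
    and Fc :: "'a \<Rightarrow> 'v \<Rightarrow> 'v set" and Fr :: "'a \<Rightarrow> 'v \<Rightarrow> 'v \<Rightarrow> 'v set"
    and Fi :: "'a \<Rightarrow> 'v \<Rightarrow> 'v set"
    and \<rho> :: "'a list" and Ss :: "'i \<Rightarrow> 'v list" and S :: "('i \<Rightarrow> 'v) list"
  assumes "well_nested_npr prog kd \<rho>"
    and "\<forall>j. Ss j \<noteq> []" and "S \<noteq> []"
    and "top_tuple Ss = last S"
  shows "{top_tuple Ts | Ts. (Ss, Ts) \<in> Mw prog kd Fc Fr Fi \<rho>}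
       = {last T | T. (S, T) \<in> Sw prog kd Fc Fr Fi \<rho>}"
  using stacks_corr_reachable_tops_eq[OF _ stacks_corr_Nil[OF assms(2-4)]] assms(1)
  unfolding well_nested_npr_def by blast

end
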